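(* Let $X$ be a perfectly normal sequential space which contains a closed subspace homeomorphic to $K$ and a (not necessarily closed) subspace $V'\subset X$ homeomorphic to $V$; let $y_0'$ denote the unique non-isolated point of $V'$. Then: (a) $X$ is not homeomorphic to any closed convex subset of a (real) linear topological space; (b) $X$ is not homeomorphic to any closed multiplicative subset of a topological group; (c) there is no topological group $G$ with a multiplicative subset $M\subset G$ (with the subspace topology) and a homeomorphism $X\to M$ that sends $y_0'$ to an idempotent (i.e. to the identity element) of $G$.
   Context: $K=\{(0,0)\}\cup\{(\tfrac1n,\tfrac1{nm}) : n,m\in\mathbb N\}\subset\mathbb R^2$ with the subspace topology. Let $S_0=\{0\}\cup\{\tfrac1n:n\in\mathbb N\}\subset\mathbb R$ and let $V$ (the Fréchet–Urysohn fan) be the quotient space $(\mathbb N\times S_0)/(\mathbb N\times\{0\})$, where $\mathbb N$ is discrete, i.e. $\mathbb N\times S_0$ with the subset $\mathbb N\times\{0\}$ collapsed to a single point; $V$ has exactly one non-isolated point. A subset $A$ of a topological group $G$ is multiplicative if $a\ast b\in A$ for all $a,b\in A$, where $\ast$ is the group operation. A space is sequential if every sequentially closed set is closed. *)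

theory Defs
  imports "HOL-Analysis.Analysis"
begin

definition K_set :: "(real \<times> real) set" where
  "K_set = insert (0,0) {(1 / real n, 1 / real (n * m)) | n m. n \<ge> 1 \<and> m \<ge> 1}"

definition S0_set :: "real set" where
  "S0_set = insert 0 {1 / real n | n. n \<ge> 1}"

definition NS0_top :: "(nat \<times> real) topology" where
  "NS0_top = prod_topology (discrete_topology {n. n \<ge> 1}) (top_of_set S0_set)"

text \<open>Quotient map collapsing \<nat> \<times> {0} to a single point (None).\<close>
definition fan_quot :: "nat \<times> real \<Rightarrow> (nat \<times> real) option" where
  "fan_quot p = (if snd p = 0 then None else Some p)"

definition fan_V :: "(nat \<times> real) option topology" where
  "fan_V = topology (\<lambda>U. U \<subseteq> fan_quot ` topspace NS0_top \<and>
                          openin NS0_top {x \<in> topspace NS0_top. fan_quot x \<in> U})"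

definition seq_closed_in :: "'a topology \<Rightarrow> 'a set \<Rightarrow> bool" where
  "seq_closed_in X A \<longleftrightarrow> A \<subseteq> topspace X \<and>
     (\<forall>f l. (\<forall>n. f n \<in> A) \<and> limitin X f l sequentially \<longrightarrow> l \<in> A)"

definition sequential_space :: "'a topology \<Rightarrow> bool" where
  "sequential_space X \<longleftrightarrow> (\<forall>A. seq_closed_in X A \<longrightarrow> closedin X A)"

text \<open>Perfectly normal (Engelking's convention: T1, normal, every closed set a G_delta).\<close>
definition perfectly_normal_space :: "'a topology \<Rightarrow> bool" where
  "perfectly_normal_space X \<longleftrightarrow> t1_space X \<and> normal_space X \<and>
     (\<forall>C. closedin X C \<longrightarrow> gdelta_in X C)"

definition linear_topological_space :: "'v::real_vector topology \<Rightarrow> bool" where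
  "linear_topological_space T \<longleftrightarrow> topspace T = UNIV \<and>
     continuous_map (prod_topology T T) T (\<lambda>(x, y). x + y) \<and>
     continuous_map (prod_topology euclideanreal T) T (\<lambda>(a, x). a *\<^sub>R x)"

definition topological_group ::
  "'g topology \<Rightarrow> ('g \<Rightarrow> 'g \<Rightarrow> 'g) \<Rightarrow> 'g \<Rightarrow> ('g \<Rightarrow> 'g) \<Rightarrow> bool" where
  "topological_group G mul e iv \<longleftrightarrow>
     (\<forall>x\<in>topspace G. \<forall>y\<in>topspace G. mul x y \<in> topspace G) \<and>
     (\<forall>x\<in>topspace G. \<forall>y\<in>topspace G. \<forall>z\<in>topspace G. mul (mul x y) z = mul x (mul y z)) \<and>
     e \<in> topspace G \<and>
     (\<forall>x\<in>topspace G. mul e x = x \<and> mul x e = x) \<and>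
     (\<forall>x\<in>topspace G. iv x \<in> topspace G \<and> mul (iv x) x = e \<and> mul x (iv x) = e) \<and>
     continuous_map (prod_topology G G) G (\<lambda>(x, y). mul x y) \<and>
     continuous_map G G iv"

definition multiplicative_subset :: "('g \<Rightarrow> 'g \<Rightarrow> 'g) \<Rightarrow> 'g set \<Rightarrow> bool" where
  "multiplicative_subset mul A \<longleftrightarrow> (\<forall>a\<in>A. \<forall>b\<in>A. mul a b \<in> A)"

end

theory Submission
  imports Defs
begin

(* The whole theorem reduces to one abstract obstruction.  A K-configuration in X is a
   double sequence kappa n m whose rows kappa n _ have no convergent subsequences and
   which converges to a point k0 uniformly in m as n grows; a closed copy of K carries one.
   A fan configuration is a double sequence nu n m whose rows converge to y0 while no
   sequence with row index tending to infinity does; a copy of the fan V carries one.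
   If X is perfectly normal and sequential and has a continuous binary operation st from
   which each argument can be recovered in the limit, then the points
   st (kappa n m, nu n (m + t n)), for a suitable shift t of the rows of the fan, have
   st (k0, y0) in their closure although no sequence of them converges; this contradicts
   sequentiality (lemma no_cancellative_operation).  Such an operation is transported to X
   from the midpoint map of a closed convex set, from the multiplication of a closed
   multiplicative set, or, when the vertex of the fan is sent to the identity, from the
   multiplication of an arbitrary multiplicative set. *)

lemma limitin_filter_mono:
  assumes "limitin X f l F" "F' \<le> F"
  shows "limitin X f l F'"
  using assms unfolding limitin_def by (auto intro: filter_leD)

lemma limitin_compose_filterlim:
  assumes "limitin X f l F" "filterlim g F F'"
  shows "limitin X (\<lambda>x. f (g x)) l F'"
  using assms unfolding limitin_def filterlim_def
  by (auto simp: eventually_filtermap dest: filter_leD)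

lemma limitin_continuous_map2:
  assumes op: "continuous_map (prod_topology S T) U op"
    and "limitin S a x F" "limitin T b y F"
  shows "limitin U (\<lambda>j. op (a j, b j)) (op (x, y)) F"
proof -
  have "limitin (prod_topology S T) (\<lambda>j. (a j, b j)) (x, y) F"
    using assms(2,3) by (simp add: limitin_pairwise o_def)
  from continuous_map_limit[OF op this] show ?thesis by (simp add: o_def)
qed

lemma eventually_ne_imp_filterlim_at_top:
  fixes f :: "'a \<Rightarrow> nat"
  assumes "\<And>m. eventually (\<lambda>j. f j \<noteq> m) F"
  shows "filterlim f at_top F"
  unfolding filterlim_at_top
proof
  fix M
  have "eventually (\<lambda>j. \<forall>m\<in>{..<M}. f j \<noteq> m) F"
    using assms by (intro eventually_ball_finite) auto
  then show "eventually (\<lambda>j. M \<le> f j) F"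
    by (rule eventually_mono) (auto simp: not_less[symmetric])
qed

lemma frequently_restrict_filter:
  assumes "frequently P F"
  shows "inf F (principal {x. P x}) \<noteq> bot" "eventually P (inf F (principal {x. P x}))"
    "inf F (principal {x. P x}) \<le> F"
  using assms by (auto simp: frequently_def trivial_limit_def eventually_inf_principal)

lemma double_index_cases:
  fixes nn mm :: "nat \<Rightarrow> nat"
  obtains "filterlim nn at_top sequentially"
  | n F where "F \<noteq> bot" "F \<le> sequentially" "eventually (\<lambda>j. nn j = n) F" "filterlim mm at_top F"
  | n m F where "F \<noteq> bot" "F \<le> sequentially" "eventually (\<lambda>j. nn j = n \<and> mm j = m) F"
proof (cases "\<exists>n. frequently (\<lambda>j. nn j = n) sequentially")
  case False
  then have "filterlim nn at_top sequentially"
    by (intro eventually_ne_imp_filterlim_at_top) (auto simp: frequently_def)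
  then show ?thesis by (rule that(1))
next
  case True
  then obtain n where "frequently (\<lambda>j. nn j = n) sequentially" by blast
  from frequently_restrict_filter[OF this]
  obtain F where F: "F \<noteq> bot" "F \<le> sequentially" "eventually (\<lambda>j. nn j = n) F" by blast
  show ?thesis
  proof (cases "\<exists>m. frequently (\<lambda>j. mm j = m) F")
    case False
    then have "filterlim mm at_top F"
      by (intro eventually_ne_imp_filterlim_at_top) (auto simp: frequently_def)
    with F show ?thesis by (intro that(2))
  next
    case True
    then obtain m where "frequently (\<lambda>j. mm j = m) F" by blast
    from frequently_restrict_filter[OF this]
    obtain F' where "F' \<noteq> bot" "F' \<le> F" "eventually (\<lambda>j. mm j = m) F'" by blast
    moreover have "eventually (\<lambda>j. nn j = n) F'"
      using filter_leD[OF \<open>F' \<le> F\<close> F(3)] .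
    ultimately show ?thesis
      using F(2) by (intro that(3)[of F']) (auto intro: eventually_conj order_trans)
  qed
qed

lemma homeomorphic_maps_subtopologyD:
  assumes "homeomorphic_maps X (subtopology T C) F F'"
  shows "\<And>x. x \<in> topspace X \<Longrightarrow> F x \<in> topspace T \<inter> C"
    and "\<And>x. x \<in> topspace X \<Longrightarrow> F' (F x) = x"
    and "\<And>y. y \<in> topspace T \<inter> C \<Longrightarrow> F' y \<in> topspace X \<and> F (F' y) = y"
    and "continuous_map X T F"
proof -
  have F: "continuous_map X (subtopology T C) F" and F': "continuous_map (subtopology T C) X F'"
    using assms by (auto simp: homeomorphic_maps_def)
  show "\<And>x. x \<in> topspace X \<Longrightarrow> F x \<in> topspace T \<inter> C"
    using continuous_map_image_subset_topspace[OF F] by auto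
  show "\<And>y. y \<in> topspace T \<inter> C \<Longrightarrow> F' y \<in> topspace X \<and> F (F' y) = y"
    using continuous_map_image_subset_topspace[OF F'] assms by (auto simp: homeomorphic_maps_def)
  show "\<And>x. x \<in> topspace X \<Longrightarrow> F' (F x) = x" "continuous_map X T F"
    using assms by (auto simp: homeomorphic_maps_def continuous_map_in_subtopology)
qed

lemma homeomorphic_maps_limit_reflect:
  assumes hm: "homeomorphic_maps X (subtopology Y S) f g"
    and s: "\<And>j. s j \<in> topspace X" and w: "w \<in> S"
    and lim: "limitin Y (\<lambda>j. f (s j)) w F"
  shows "limitin X s (g w) F"
proof -
  have f: "continuous_map X (subtopology Y S) f" and g: "continuous_map (subtopology Y S) X g"
    and gf: "\<And>x. x \<in> topspace X \<Longrightarrow> g (f x) = x"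
    using hm by (auto simp: homeomorphic_maps_def)
  have "f (s j) \<in> S" for j
    using continuous_map_image_subset_topspace[OF f] s by auto
  then have "limitin (subtopology Y S) (\<lambda>j. f (s j)) w F"
    using lim w by (simp add: limitin_subtopology)
  from continuous_map_limit[OF g this] show ?thesis
    by (simp add: o_def gf s)
qed

lemma homeomorphic_maps_limit_reflect_point:
  assumes hm: "homeomorphic_maps X (subtopology T C) F F'"
    and s: "\<And>j. s j \<in> topspace X" and x: "x \<in> topspace X"
    and lim: "limitin T (\<lambda>j. F (s j)) (F x) G"
  shows "limitin X s x G"
proof -
  have "F x \<in> C" and "F' (F x) = x"
    using homeomorphic_maps_subtopologyD(1,2)[OF hm x] by auto
  then show ?thesis
    using homeomorphic_maps_limit_reflect[OF hm s _ lim] by simp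
qed

lemma transported_operation:
  assumes hm: "homeomorphic_maps X (subtopology T C) F F'"
    and op: "continuous_map (prod_topology T T) T op"
    and op_C: "\<And>x y. x \<in> topspace T \<inter> C \<Longrightarrow> y \<in> topspace T \<inter> C \<Longrightarrow> op (x, y) \<in> C"
  shows "continuous_map (prod_topology X X) X (\<lambda>z. F' (op (F (fst z), F (snd z))))"
    and "\<And>x y. x \<in> topspace X \<Longrightarrow> y \<in> topspace X \<Longrightarrow> F (F' (op (F x, F y))) = op (F x, F y)"
proof -
  note H = homeomorphic_maps_subtopologyD[OF hm]
  have opX: "op (F x, F y) \<in> topspace T \<inter> C" if "x \<in> topspace X" "y \<in> topspace X" for x y
  proof -
    have "(F x, F y) \<in> topspace (prod_topology T T)"
      using H(1) that by simp
    then have "op (F x, F y) \<in> topspace T"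
      using continuous_map_image_subset_topspace[OF op] by blast
    then show ?thesis
      using op_C H(1) that by blast
  qed
  have FF: "continuous_map (prod_topology X X) (prod_topology T T) (\<lambda>z. (F (fst z), F (snd z)))"
    by (intro continuous_map_pairedI continuous_map_compose[OF continuous_map_fst H(4), unfolded o_def]
        continuous_map_compose[OF continuous_map_snd H(4), unfolded o_def])
  have "continuous_map (prod_topology X X) T (\<lambda>z. op (F (fst z), F (snd z)))"
    using continuous_map_compose[OF FF op] by (simp add: o_def)
  then have "continuous_map (prod_topology X X) (subtopology T C) (\<lambda>z. op (F (fst z), F (snd z)))"
    unfolding continuous_map_in_subtopology using opX by fastforce
  moreover have "continuous_map (subtopology T C) X F'"
    using hm by (simp add: homeomorphic_maps_def)
  ultimately show "continuous_map (prod_topology X X) X (\<lambda>z. F' (op (F (fst z), F (snd z))))"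
    using continuous_map_compose by (simp add: o_def)
  show "\<And>x y. x \<in> topspace X \<Longrightarrow> y \<in> topspace X \<Longrightarrow> F (F' (op (F x, F y))) = op (F x, F y)"
    using H(3) opX by blast
qed

text \<open>In a perfectly normal space every point \<open>q\<close> has open neighbourhoods \<open>D n\<close> such that any
  convergent sequence whose \<open>j\<close>-th term lies in \<open>D (nn j)\<close>, with \<open>nn j\<close> tending to infinity,
  converges to \<open>q\<close>.  (Write \<open>{q}\<close> as a countable intersection of open sets and shrink them
  by normality.)\<close>

lemma perfectly_normal_point_nbhds:
  assumes pn: "perfectly_normal_space X" and q: "q \<in> topspace X"
  obtains D :: "nat \<Rightarrow> 'a set"
  where "\<And>n. openin X (D n)" "\<And>n. q \<in> D n"
    and "\<And>x (nn :: nat \<Rightarrow> nat) z. filterlim nn at_top sequentially \<Longrightarrow> (\<And>j. x j \<in> D (nn j)) \<Longrightarrow>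
           limitin X x z sequentially \<Longrightarrow> z = q"
proof -
  have nor: "normal_space X" and cq: "closedin X {q}"
    using pn q by (auto simp: perfectly_normal_space_def closedin_t1_singleton)
  then have "(countable intersection_of openin X) {q}"
    using pn by (auto simp: perfectly_normal_space_def gdelta_in_alt)
  then obtain \<U> where \<U>: "countable \<U>" "\<And>U. U \<in> \<U> \<Longrightarrow> openin X U" "\<Inter>\<U> = {q}"
    unfolding intersection_of_def by blast
  define U where "U = from_nat_into (insert (topspace X) \<U>)"
  have rangeU: "range U = insert (topspace X) \<U>"
    unfolding U_def using \<U>(1) by (intro range_from_nat_into) auto
  have "U i \<in> insert (topspace X) \<U>" for i
    using rangeU by blast
  then have U: "openin X (U i)" "q \<in> U i" for i
    using \<U> q by (metis insert_iff openin_topspace, blast)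
  have InterU: "\<Inter>(range U) = {q}"
    using \<U>(3) q unfolding rangeU by auto
  have "\<exists>W. openin X W \<and> q \<in> W \<and> X closure_of W \<subseteq> U i" for i
    using normal_space_alt[THEN iffD1, OF nor, rule_format, of "{q}" "U i"] cq U[of i] by auto
  then obtain W where W: "\<And>i. openin X (W i)" "\<And>i. q \<in> W i" "\<And>i. X closure_of W i \<subseteq> U i"
    by metis
  define D where "D n = \<Inter>(W ` {..n})" for n
  show ?thesis
  proof
    show "openin X (D n)" "q \<in> D n" for n
      unfolding D_def using W by (auto intro: openin_Inter)
  next
    fix x nn z
    assume nn: "filterlim nn at_top sequentially" and x: "\<And>j. x j \<in> D (nn j)"
      and lim: "limitin X x z sequentially"
    have "z \<in> X closure_of W i" for i
    proof (rule limitin_closedin[OF lim closedin_closure_of _ trivial_limit_sequentially])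
      have "eventually (\<lambda>j. i \<le> nn j) sequentially"
        using nn by (simp add: filterlim_at_top)
      then show "eventually (\<lambda>j. x j \<in> X closure_of W i) sequentially"
        by (rule eventually_mono)
          (use x closure_of_subset[OF openin_subset[OF W(1)]] in \<open>auto simp: D_def\<close>)
    qed
    then show "z = q"
      using W(3) InterU by blast
  qed
qed

text \<open>For a double sequence \<open>b\<close> none of whose rows has a convergent subsequence and none of
  whose sequences with row index tending to infinity converges, the set of points \<open>b n m\<close>
  different from a given point \<open>p\<close> is sequentially closed in a T1 space: a convergent sequence
  of such points must, by the classification of index pairs, be eventually constant.\<close>

lemma double_sequence_seq_closed:
  fixes b :: "nat \<Rightarrow> nat \<Rightarrow> 'a"
  assumes t1: "t1_space X" and bX: "\<And>n m. b n m \<in> topspace X"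
    and rows: "\<And>n (F :: nat filter) mm z. F \<noteq> bot \<Longrightarrow> filterlim mm at_top F \<Longrightarrow>
                 \<not> limitin X (\<lambda>j. b n (mm j)) z F"
    and diagonals: "\<And>nn mm z. filterlim nn at_top sequentially \<Longrightarrow>
                 \<not> limitin X (\<lambda>j. b (nn j) (mm j)) z sequentially"
  shows "seq_closed_in X {b n m | n m. b n m \<noteq> p}" (is "seq_closed_in X ?B")
  unfolding seq_closed_in_def
proof (intro conjI allI impI)
  show "?B \<subseteq> topspace X" using bX by auto
  fix s z assume "(\<forall>j. s j \<in> ?B) \<and> limitin X s z sequentially"
  then have sB: "\<And>j. s j \<in> ?B" and lim: "limitin X s z sequentially" by auto
  have "\<forall>j. \<exists>n m. s j = b n m \<and> b n m \<noteq> p"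
    using sB by auto
  then obtain nn mm where s: "\<And>j. s j = b (nn j) (mm j)" and ne: "\<And>j. b (nn j) (mm j) \<noteq> p"
    by metis
  have lim_sub: "limitin X (\<lambda>j. b (nn j) (mm j)) z F" if "F \<le> sequentially" for F
  proof -
    have "s = (\<lambda>j. b (nn j) (mm j))" using s by blast
    then show ?thesis using limitin_filter_mono[OF lim that] by simp
  qed
  show "z \<in> ?B"
  proof (cases rule: double_index_cases[where nn=nn and mm=mm])
    case 1
    then show ?thesis using diagonals[OF 1] lim_sub[OF order_refl] by blast
  next
    case (2 n F)
    have "limitin X (\<lambda>j. b n (mm j)) z F"
      by (rule limitin_transform_eventually[OF _ lim_sub[OF 2(2)]])
        (use 2(3) in \<open>auto elim: eventually_mono\<close>)
    then show ?thesis using rows[OF 2(1,4)] by blast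
  next
    case (3 n m F)
    have "limitin X (\<lambda>j. b n m) z F"
      by (rule limitin_transform_eventually[OF _ lim_sub[OF 3(2)]])
        (use 3(3) in \<open>auto elim: eventually_mono\<close>)
    then have "z = b n m"
      using limitin_const_iff[OF t1 3(1)] by simp
    moreover obtain j where "nn j = n \<and> mm j = m"
      using eventually_happens'[OF 3(1,3)] by blast
    ultimately show ?thesis using ne[of j] by auto
  qed
qed

text \<open>Otherwise the set
  of points \<open>b n m \<noteq> p\<close> would be closed by the previous lemma, yet have \<open>p\<close> in its closure.\<close>

lemma sequential_space_no_arens_configuration:
  fixes b :: "nat \<Rightarrow> nat \<Rightarrow> 'a"
  assumes t1: "t1_space X" and sq: "sequential_space X"
    and bX: "\<And>n m. b n m \<in> topspace X" and pX: "p \<in> topspace X"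
    and tails: "\<And>W. openin X W \<Longrightarrow> p \<in> W \<Longrightarrow> \<exists>n. eventually (\<lambda>m. b n m \<in> W) sequentially"
    and rows: "\<And>n (F :: nat filter) mm z. F \<noteq> bot \<Longrightarrow> filterlim mm at_top F \<Longrightarrow>
                 \<not> limitin X (\<lambda>j. b n (mm j)) z F"
    and diagonals: "\<And>nn mm z. filterlim nn at_top sequentially \<Longrightarrow>
                 \<not> limitin X (\<lambda>j. b (nn j) (mm j)) z sequentially"
  shows False
proof -
  define B where "B = {b n m | n m. b n m \<noteq> p}"
  have closedB: "closedin X B"
    using double_sequence_seq_closed[OF t1 bX rows diagonals] sq
    by (simp add: sequential_space_def B_def)
  have "p \<in> X closure_of B"
    unfolding in_closure_of
  proof (intro conjI allI impI pX)
    fix W assume "p \<in> W \<and> openin X W"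
    then obtain n where inW: "eventually (\<lambda>m. b n m \<in> W) sequentially"
      using tails by blast
    have "\<not> limitin X (\<lambda>m. b n m) p sequentially"
      using rows[of sequentially id n p] by (simp add: filterlim_ident id_def)
    then have "frequently (\<lambda>m. b n m \<noteq> p) sequentially"
      using pX by (auto simp: frequently_def intro: limitin_eventually)
    from frequently_eventually_frequently[OF this inW]
    obtain m where "b n m \<noteq> p" "b n m \<in> W"
      by (auto dest: frequently_ex)
    then show "\<exists>y. y \<in> B \<and> y \<in> W" by (auto simp: B_def)
  qed
  then show False
    using closedB by (auto simp: closure_of_closedin B_def)
qed

definition K_configuration :: "'a topology \<Rightarrow> (nat \<Rightarrow> nat \<Rightarrow> 'a) \<Rightarrow> 'a \<Rightarrow> bool" where
  "K_configuration X \<kappa> k0 \<longleftrightarrow> k0 \<in> topspace X \<and> (\<forall>n m. \<kappa> n m \<in> topspace X) \<and>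
     (\<forall>U. openin X U \<and> k0 \<in> U \<longrightarrow> (\<exists>N. \<forall>n\<ge>N. \<forall>m. \<kappa> n m \<in> U)) \<and>
     (\<forall>n (F :: nat filter) mm z. F \<noteq> bot \<and> filterlim mm at_top F \<longrightarrow>
        \<not> limitin X (\<lambda>j. \<kappa> n (mm j)) z F)"

definition fan_configuration :: "'a topology \<Rightarrow> (nat \<Rightarrow> nat \<Rightarrow> 'a) \<Rightarrow> 'a \<Rightarrow> bool" where
  "fan_configuration X \<nu> y0 \<longleftrightarrow> y0 \<in> topspace X \<and> (\<forall>n m. \<nu> n m \<in> topspace X) \<and>
     (\<forall>n. limitin X (\<nu> n) y0 sequentially) \<and>
     (\<forall>nn mm. filterlim nn at_top sequentially \<longrightarrow>
        \<not> limitin X (\<lambda>j. \<nu> (nn j) (mm j)) y0 sequentially)"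

lemma K_configuration_diagonal:
  assumes K: "K_configuration X \<kappa> k0" and nn: "filterlim nn at_top sequentially"
  shows "limitin X (\<lambda>j. \<kappa> (nn j) (mm j)) k0 sequentially"
  unfolding limitin_def
proof (intro conjI allI impI)
  show "k0 \<in> topspace X" using K by (simp add: K_configuration_def)
  fix U assume "openin X U \<and> k0 \<in> U"
  then obtain N where N: "\<forall>n\<ge>N. \<forall>m. \<kappa> n m \<in> U"
    using K by (auto simp: K_configuration_def)
  have "eventually (\<lambda>j. N \<le> nn j) sequentially"
    using nn by (simp add: filterlim_at_top)
  then show "eventually (\<lambda>j. \<kappa> (nn j) (mm j) \<in> U) sequentially"
    by (rule eventually_mono) (use N in blast)
qed

lemma continuous_operation_tails:
  assumes st: "continuous_map (prod_topology X X) X st"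
    and K: "K_configuration X \<kappa> k0" and y0: "y0 \<in> topspace X"
    and v: "\<And>n. limitin X (v n) y0 sequentially"
    and W: "openin X W" "st (k0, y0) \<in> W"
  shows "\<exists>n. eventually (\<lambda>m. st (\<kappa> n m, v n m) \<in> W) sequentially"
proof -
  have k0: "k0 \<in> topspace X" using K by (simp add: K_configuration_def)
  have "openin (prod_topology X X) {z \<in> topspace (prod_topology X X). st z \<in> W}"
    by (rule openin_continuous_map_preimage[OF st W(1)])
  moreover have "(k0, y0) \<in> {z \<in> topspace (prod_topology X X). st z \<in> W}"
    using k0 y0 W(2) by simp
  ultimately obtain U1 U2 where U: "openin X U1" "openin X U2" "k0 \<in> U1" "y0 \<in> U2"
    "U1 \<times> U2 \<subseteq> {z \<in> topspace (prod_topology X X). st z \<in> W}"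
    unfolding openin_prod_topology_alt by meson
  obtain N where N: "\<forall>n\<ge>N. \<forall>m. \<kappa> n m \<in> U1"
    using K U(1,3) by (auto simp: K_configuration_def)
  have "eventually (\<lambda>m. v N m \<in> U2) sequentially"
    using limitinD[OF v U(2,4)] .
  then have "eventually (\<lambda>m. st (\<kappa> N m, v N m) \<in> W) sequentially"
    by (rule eventually_mono) (use N U(5) in blast)
  then show ?thesis by blast
qed

lemma shift_rows_into_nbhds:
  assumes lim: "\<And>n. limitin X (\<nu> n) y0 sequentially" and \<psi>: "continuous_map X Y \<psi>"
    and D: "\<And>n. openin Y (D n)" "\<And>n. \<psi> y0 \<in> D n"
  obtains t where "\<And>n m. \<psi> (\<nu> n (m + t n)) \<in> D n"
proof -
  have "\<forall>n. \<exists>t. \<forall>m\<ge>t. \<psi> (\<nu> n m) \<in> D n"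
  proof
    fix n
    have "eventually (\<lambda>m. \<psi> (\<nu> n m) \<in> D n) sequentially"
      using limitinD[OF continuous_map_limit[OF \<psi> lim[of n]] D(1,2)] by (simp add: o_def)
    then show "\<exists>t. \<forall>m\<ge>t. \<psi> (\<nu> n m) \<in> D n" by (simp add: eventually_sequentially)
  qed
  then obtain t where "\<And>n m. m \<ge> t n \<Longrightarrow> \<psi> (\<nu> n m) \<in> D n"
    using choice[of "\<lambda>n t. \<forall>m\<ge>t. \<psi> (\<nu> n m) \<in> D n"] by blast
  then have "\<And>n m. \<psi> (\<nu> n (m + t n)) \<in> D n" by simp
  then show ?thesis by (rule that)
qed

text \<open>The double sequence
  \<open>st (\<kappa> n m, v n m)\<close> built from a shifted fan then contradicts the previous lemma.\<close>

lemma no_cancellative_operation: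
  assumes pn: "perfectly_normal_space X" and sq: "sequential_space X"
    and K: "K_configuration X \<kappa> k0" and V: "fan_configuration X \<nu> y0"
    and st: "continuous_map (prod_topology X X) X st" and \<psi>: "continuous_map X X \<psi>"
    and cancel_left: "\<And>(F :: nat filter) a b z. F \<noteq> bot \<Longrightarrow>
          (\<And>j. a j \<in> topspace X) \<Longrightarrow> (\<And>j. b j \<in> topspace X) \<Longrightarrow>
          limitin X (\<lambda>j. st (a j, b j)) z F \<Longrightarrow> limitin X b y0 F \<Longrightarrow> \<exists>w. limitin X a w F"
    and cancel_right: "\<And>a b z. (\<And>j. a j \<in> topspace X) \<Longrightarrow> (\<And>j. b j \<in> topspace X) \<Longrightarrow>
          limitin X (\<lambda>j. st (a j, b j)) z sequentially \<Longrightarrow> limitin X a k0 sequentially \<Longrightarrow>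
          \<exists>w. limitin X (\<lambda>j. \<psi> (b j)) w sequentially"
    and \<psi>_reflect: "\<And>x. (\<And>j. x j \<in> topspace X) \<Longrightarrow>
          limitin X (\<lambda>j. \<psi> (x j)) (\<psi> y0) sequentially \<Longrightarrow> limitin X x y0 sequentially"
  shows False
proof -
  have t1: "t1_space X" using pn by (simp add: perfectly_normal_space_def)
  have k0: "k0 \<in> topspace X" and \<kappa>: "\<And>n m. \<kappa> n m \<in> topspace X"
    and \<kappa>_rows: "\<And>n (F :: nat filter) mm z. F \<noteq> bot \<Longrightarrow> filterlim mm at_top F \<Longrightarrow>
                   \<not> limitin X (\<lambda>j. \<kappa> n (mm j)) z F"
    using K by (auto simp: K_configuration_def)
  have y0: "y0 \<in> topspace X" and \<nu>: "\<And>n m. \<nu> n m \<in> topspace X"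
    and \<nu>_lim: "\<And>n. limitin X (\<nu> n) y0 sequentially"
    and \<nu>_diag: "\<And>nn mm. filterlim nn at_top sequentially \<Longrightarrow>
                   \<not> limitin X (\<lambda>j. \<nu> (nn j) (mm j)) y0 sequentially"
    using V by (auto simp: fan_configuration_def)
  have \<psi>y0: "\<psi> y0 \<in> topspace X"
    using continuous_map_image_subset_topspace[OF \<psi>] y0 by blast
  obtain D where D: "\<And>n. openin X (D n)" "\<And>n. \<psi> y0 \<in> D n"
    and D_lim: "\<And>x (nn :: nat \<Rightarrow> nat) z. filterlim nn at_top sequentially \<Longrightarrow> (\<And>j. x j \<in> D (nn j)) \<Longrightarrow>
                  limitin X x z sequentially \<Longrightarrow> z = \<psi> y0"
    using perfectly_normal_point_nbhds[OF pn \<psi>y0] by metis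
  obtain t where t: "\<And>n m. \<psi> (\<nu> n (m + t n)) \<in> D n"
    using shift_rows_into_nbhds[where \<nu>=\<nu> and \<psi>=\<psi> and D=D, OF \<nu>_lim \<psi> D] by blast
  define v where "v n m = \<nu> n (m + t n)" for n m
  have v: "\<And>n m. v n m \<in> topspace X" and vD: "\<And>n m. \<psi> (v n m) \<in> D n"
    by (simp_all add: v_def \<nu> t)
  have v_lim: "limitin X (v n) y0 sequentially" for n
    unfolding v_def using limitin_sequentially_offset[OF \<nu>_lim[of n], of "t n"] by simp
  have st_X: "st (x, y) \<in> topspace X" if "x \<in> topspace X" "y \<in> topspace X" for x y
    using continuous_map_image_subset_topspace[OF st] that by auto
  show False
  proof (rule sequential_space_no_arens_configuration[OF t1 sq, of "\<lambda>n m. st (\<kappa> n m, v n m)"])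
    show "\<And>n m. st (\<kappa> n m, v n m) \<in> topspace X" "st (k0, y0) \<in> topspace X"
      by (simp_all add: st_X \<kappa> v k0 y0)
    show "\<exists>n. eventually (\<lambda>m. st (\<kappa> n m, v n m) \<in> W) sequentially"
      if "openin X W" "st (k0, y0) \<in> W" for W
      using continuous_operation_tails[OF st K y0 v_lim that] .
  next
    fix n :: nat and F :: "nat filter" and mm :: "nat \<Rightarrow> nat" and z
    assume F: "F \<noteq> bot" and mm: "filterlim mm at_top F"
    show "\<not> limitin X (\<lambda>j. st (\<kappa> n (mm j), v n (mm j))) z F"
    proof
      assume lim: "limitin X (\<lambda>j. st (\<kappa> n (mm j), v n (mm j))) z F"
      have "\<exists>w. limitin X (\<lambda>j. \<kappa> n (mm j)) w F"
        by (rule cancel_left[OF F _ _ lim limitin_compose_filterlim[OF v_lim mm]])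
          (simp_all add: \<kappa> v)
      then show False using \<kappa>_rows[OF F mm] by blast
    qed
  next
    fix nn mm :: "nat \<Rightarrow> nat" and z
    assume nn: "filterlim nn at_top sequentially"
    show "\<not> limitin X (\<lambda>j. st (\<kappa> (nn j) (mm j), v (nn j) (mm j))) z sequentially"
    proof
      assume lim: "limitin X (\<lambda>j. st (\<kappa> (nn j) (mm j), v (nn j) (mm j))) z sequentially"
      have "\<exists>w. limitin X (\<lambda>j. \<psi> (v (nn j) (mm j))) w sequentially"
        by (rule cancel_right[OF _ _ lim K_configuration_diagonal[OF K nn]]) (simp_all add: \<kappa> v)
      then obtain w where w: "limitin X (\<lambda>j. \<psi> (v (nn j) (mm j))) w sequentially" ..
      have "w = \<psi> y0"
        by (rule D_lim[OF nn _ w]) (rule vD)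
      with w have "limitin X (\<lambda>j. v (nn j) (mm j)) y0 sequentially"
        using \<psi>_reflect[of "\<lambda>j. v (nn j) (mm j)"] v by simp
      then show False
        using \<nu>_diag[OF nn, of "\<lambda>j. mm j + t (nn j)"] by (simp add: v_def)
    qed
  qed
qed

lemma closed_cancellative_no_embedding:
  assumes pn: "perfectly_normal_space X" and sq: "sequential_space X"
    and K: "K_configuration X \<kappa> k0" and V: "fan_configuration X \<nu> y0"
    and hm: "homeomorphic_maps X (subtopology T C) F F'" and C: "closedin T C"
    and op: "continuous_map (prod_topology T T) T op"
    and op_C: "\<And>x y. x \<in> topspace T \<inter> C \<Longrightarrow> y \<in> topspace T \<inter> C \<Longrightarrow> op (x, y) \<in> C"
    and L: "continuous_map (prod_topology T T) T L" and R: "continuous_map (prod_topology T T) T R"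
    and L_op: "\<And>x y. x \<in> topspace T \<inter> C \<Longrightarrow> y \<in> topspace T \<inter> C \<Longrightarrow> L (op (x, y), y) = x"
    and R_op: "\<And>x y. x \<in> topspace T \<inter> C \<Longrightarrow> y \<in> topspace T \<inter> C \<Longrightarrow> R (op (x, y), x) = y"
  shows False
proof -
  note H = homeomorphic_maps_subtopologyD[OF hm]
  define st where "st = (\<lambda>z. F' (op (F (fst z), F (snd z))))"
  have st: "continuous_map (prod_topology X X) X st"
    "\<And>x y. x \<in> topspace X \<Longrightarrow> y \<in> topspace X \<Longrightarrow> F (st (x, y)) = op (F x, F y)"
    using transported_operation[OF hm op op_C] by (simp_all add: st_def)
  \<comment> \<open>A sequence in \<open>X\<close> converges as soon as its image under \<open>F\<close> converges in \<open>T\<close>,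
    because the limit then lies in the closed set \<open>C\<close>.\<close>
  have reflect: "\<exists>w. limitin X s w G"
    if G: "G \<noteq> bot" and s: "\<And>j. s j \<in> topspace X" and lim: "limitin T (\<lambda>j. F (s j)) u G"
    for s u and G :: "nat filter"
  proof -
    have "u \<in> C"
      by (rule limitin_closedin[OF lim C always_eventually G]) (use H(1) s in blast)
    then show ?thesis
      using homeomorphic_maps_limit_reflect[OF hm s _ lim] by auto
  qed
  show False
  proof (rule no_cancellative_operation[OF pn sq K V st(1) continuous_map_id[unfolded id_def]])
    fix G :: "nat filter" and a b z
    assume G: "G \<noteq> bot" and a: "\<And>j. a j \<in> topspace X" and b: "\<And>j. b j \<in> topspace X"
      and lim_st: "limitin X (\<lambda>j. st (a j, b j)) z G" and lim_b: "limitin X b y0 G"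
    have "limitin T (\<lambda>j. L (F (st (a j, b j)), F (b j))) (L (F z, F y0)) G"
      using limitin_continuous_map2[OF L continuous_map_limit[OF H(4) lim_st]
          continuous_map_limit[OF H(4) lim_b]] by (simp add: o_def)
    moreover have "L (F (st (a j, b j)), F (b j)) = F (a j)" for j
      using st(2)[OF a b] L_op[OF H(1)[OF a] H(1)[OF b]] by simp
    ultimately show "\<exists>w. limitin X a w G"
      using reflect[OF G a] by simp
  next
    fix a b z
    assume a: "\<And>j. a j \<in> topspace X" and b: "\<And>j. b j \<in> topspace X"
      and lim_st: "limitin X (\<lambda>j. st (a j, b j)) z sequentially"
      and lim_a: "limitin X a k0 sequentially"
    have "limitin T (\<lambda>j. R (F (st (a j, b j)), F (a j))) (R (F z, F k0)) sequentially"
      using limitin_continuous_map2[OF R continuous_map_limit[OF H(4) lim_st]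
          continuous_map_limit[OF H(4) lim_a]] by (simp add: o_def)
    moreover have "R (F (st (a j, b j)), F (a j)) = F (b j)" for j
      using st(2)[OF a b] R_op[OF H(1)[OF a] H(1)[OF b]] by simp
    ultimately show "\<exists>w. limitin X (\<lambda>j. b j) w sequentially"
      using reflect[OF trivial_limit_sequentially b] by simp
  next
    show "limitin X x y0 sequentially" if "limitin X (\<lambda>j. x j) y0 sequentially" for x
      using that by simp
  qed
qed

lemma linear_topological_space_continuous_combination:
  fixes T :: "'v::real_vector topology"
  assumes T: "linear_topological_space T"
  shows "continuous_map (prod_topology T T) T (\<lambda>z. a *\<^sub>R fst z + b *\<^sub>R snd z)"
proof -
  have add: "continuous_map (prod_topology T T) T (\<lambda>(x, y). x + y)"
    and scale: "continuous_map (prod_topology euclideanreal T) T (\<lambda>(c, x). c *\<^sub>R x)"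
    using T by (auto simp: linear_topological_space_def)
  have scale_by: "continuous_map T T (\<lambda>x. c *\<^sub>R x)" for c
    using continuous_map_compose[OF continuous_map_pairedI[OF continuous_map_const[THEN iffD2]
          continuous_map_id] scale] by (simp add: o_def id_def)
  have "continuous_map (prod_topology T T) (prod_topology T T) (\<lambda>z. (a *\<^sub>R fst z, b *\<^sub>R snd z))"
    by (intro continuous_map_pairedI
        continuous_map_compose[OF continuous_map_fst scale_by, unfolded o_def]
        continuous_map_compose[OF continuous_map_snd scale_by, unfolded o_def])
  from continuous_map_compose[OF this add] show ?thesis by (simp add: o_def)
qed

text \<open>Part (a): a closed convex set is closed under midpoints, and \<open>x = 2 mid(x,y) - y\<close>.\<close>

lemma closed_convex_no_embedding:
  fixes T :: "'v::real_vector topology"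
  assumes pn: "perfectly_normal_space X" and sq: "sequential_space X"
    and K: "K_configuration X \<kappa> k0" and V: "fan_configuration X \<nu> y0"
    and T: "linear_topological_space T" and C: "convex C" "closedin T C"
    and hm: "homeomorphic_maps X (subtopology T C) F F'"
  shows False
proof -
  define mid where "mid z = (1/2) *\<^sub>R fst z + (1/2) *\<^sub>R snd z" for z :: "'v \<times> 'v"
  define reflection where "reflection z = 2 *\<^sub>R fst z + (-1) *\<^sub>R snd z" for z :: "'v \<times> 'v"
  have "reflection (mid (x, y), y) = x" "reflection (mid (x, y), x) = y" for x y
    by (simp_all add: mid_def reflection_def algebra_simps)
  moreover have "mid (x, y) \<in> C" if "x \<in> C" "y \<in> C" for x y
    using convexD[OF C(1) that, of "1/2" "1/2"] by (simp add: mid_def)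
  ultimately show False
    using closed_cancellative_no_embedding[OF pn sq K V hm C(2), of mid reflection reflection]
      linear_topological_space_continuous_combination[OF T]
    unfolding mid_def reflection_def by blast
qed

lemma topological_group_algebra:
  assumes G: "topological_group G mul e iv"
  shows "\<And>x y. x \<in> topspace G \<Longrightarrow> y \<in> topspace G \<Longrightarrow> mul (mul x y) (iv y) = x"
    and "\<And>x y. x \<in> topspace G \<Longrightarrow> y \<in> topspace G \<Longrightarrow> mul (iv x) (mul x y) = y"
    and "\<And>x y. x \<in> topspace G \<Longrightarrow> y \<in> topspace G \<Longrightarrow> mul x (mul (iv x) y) = y"
    and "\<And>x. x \<in> topspace G \<Longrightarrow> mul x e = x" and "iv e = e"
proof -
  have assoc: "\<And>a b c. a \<in> topspace G \<Longrightarrow> b \<in> topspace G \<Longrightarrow> c \<in> topspace G \<Longrightarrow>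
                 mul (mul a b) c = mul a (mul b c)"
    and unit: "e \<in> topspace G" "\<And>a. a \<in> topspace G \<Longrightarrow> mul e a = a \<and> mul a e = a"
    and inv: "\<And>a. a \<in> topspace G \<Longrightarrow> iv a \<in> topspace G \<and> mul (iv a) a = e \<and> mul a (iv a) = e"
    using G unfolding topological_group_def by blast+
  show "mul (mul x y) (iv y) = x" if "x \<in> topspace G" "y \<in> topspace G" for x y
    using assoc[of x y "iv y"] inv[of y] unit(2)[of x] that by simp
  show "mul (iv x) (mul x y) = y" if "x \<in> topspace G" "y \<in> topspace G" for x y
    using assoc[of "iv x" x y] inv[of x] unit(2)[of y] that by simp
  show "mul x (mul (iv x) y) = y" if "x \<in> topspace G" "y \<in> topspace G" for x y
    using assoc[of x "iv x" y] inv[of x] unit(2)[of y] that by simp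
  show "mul x e = x" if "x \<in> topspace G" for x
    using unit(2)[OF that] by simp
  show "iv e = e"
    using inv[OF unit(1)] unit(2)[of "iv e"] by simp
qed

lemma topological_group_continuous_mul:
  assumes G: "topological_group G mul e iv"
    and f: "continuous_map Z G f" and g: "continuous_map Z G g"
  shows "continuous_map Z G (\<lambda>z. mul (f z) (g z))"
proof -
  have "continuous_map (prod_topology G G) G (\<lambda>(x, y). mul x y)"
    using G by (simp add: topological_group_def)
  from continuous_map_compose[OF continuous_map_pairedI[OF f g] this] show ?thesis
    by (simp add: o_def)
qed

lemma topological_group_continuous_inverse:
  assumes G: "topological_group G mul e iv" and f: "continuous_map Z G f"
  shows "continuous_map Z G (\<lambda>z. iv (f z))"
proof -
  have "continuous_map G G iv"
    using G by (simp add: topological_group_def)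
  from continuous_map_compose[OF f this] show ?thesis
    by (simp add: o_def)
qed

lemma topological_group_limit_mul:
  assumes G: "topological_group G mul e iv" and a: "limitin G a x F" and b: "limitin G b y F"
  shows "limitin G (\<lambda>j. mul (a j) (b j)) (mul x y) F"
proof -
  have "continuous_map (prod_topology G G) G (\<lambda>z. mul (fst z) (snd z))"
    by (intro topological_group_continuous_mul[OF G] continuous_map_fst continuous_map_snd)
  from limitin_continuous_map2[OF this a b] show ?thesis by simp
qed

lemma topological_group_limit_inverse:
  assumes G: "topological_group G mul e iv" and a: "limitin G a x F"
  shows "limitin G (\<lambda>j. iv (a j)) (iv x) F"
  using continuous_map_limit[OF topological_group_continuous_inverse[OF G continuous_map_id] a]
  by (simp add: o_def)

text \<open>Part (b): a closed multiplicative set with \<open>x = (xy)y\<inverse>\<close> and \<open>y = x\<inverse>(xy)\<close>.\<close>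

lemma closed_multiplicative_no_embedding:
  assumes pn: "perfectly_normal_space X" and sq: "sequential_space X"
    and K: "K_configuration X \<kappa> k0" and V: "fan_configuration X \<nu> y0"
    and G: "topological_group G mul e iv" and M: "closedin G M" "multiplicative_subset mul M"
    and hm: "homeomorphic_maps X (subtopology G M) F F'"
  shows False
proof (rule closed_cancellative_no_embedding[OF pn sq K V hm M(1)])
  show "continuous_map (prod_topology G G) G (\<lambda>z. mul (fst z) (snd z))"
    "continuous_map (prod_topology G G) G (\<lambda>z. mul (fst z) (iv (snd z)))"
    "continuous_map (prod_topology G G) G (\<lambda>z. mul (iv (snd z)) (fst z))"
    by (intro topological_group_continuous_mul[OF G] topological_group_continuous_inverse[OF G]
        continuous_map_fst continuous_map_snd)+
  show "(\<lambda>z. mul (fst z) (snd z)) (x, y) \<in> M" if "x \<in> topspace G \<inter> M" "y \<in> topspace G \<inter> M" for x y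
    using M(2) that by (simp add: multiplicative_subset_def)
qed (simp_all add: topological_group_algebra[OF G])

text \<open>Part (c): the set need not be closed, but \<open>y0\<close> goes to the identity.  Recovering the first
  argument then produces the limit \<open>F z e\<inverse> = F z\<close>, which lies in the image; the second argument
  is recovered only after the transported left translation \<open>\<psi>\<close> by \<open>k0\<close>, with limit \<open>F z\<close> again,
  and \<open>\<psi>\<close> reflects convergence to \<open>y0\<close> because \<open>F (\<psi> y0) = F k0\<close>.\<close>

lemma multiplicative_identity_no_embedding:
  assumes pn: "perfectly_normal_space X" and sq: "sequential_space X"
    and K: "K_configuration X \<kappa> k0" and V: "fan_configuration X \<nu> y0"
    and G: "topological_group G mul e iv" and M: "multiplicative_subset mul M"
    and hm: "homeomorphic_maps X (subtopology G M) F F'" and Fy0: "F y0 = e"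
  shows False
proof -
  note H = homeomorphic_maps_subtopologyD[OF hm]
  note alg = topological_group_algebra[OF G]
  note lim_mul = topological_group_limit_mul[OF G] and lim_iv = topological_group_limit_inverse[OF G]
  have k0: "k0 \<in> topspace X" and y0: "y0 \<in> topspace X"
    using K V by (simp_all add: K_configuration_def fan_configuration_def)
  have Fk0: "F k0 \<in> topspace G" and iv_Fk0: "iv (F k0) \<in> topspace G"
    using H(1)[OF k0] G by (auto simp: topological_group_def)
  have mul: "continuous_map (prod_topology G G) G (\<lambda>z. mul (fst z) (snd z))"
    by (intro topological_group_continuous_mul[OF G] continuous_map_fst continuous_map_snd)
  have mul_M: "(\<lambda>z. mul (fst z) (snd z)) (x, y) \<in> M" if "x \<in> topspace G \<inter> M" "y \<in> topspace G \<inter> M" for x y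
    using M that by (simp add: multiplicative_subset_def)
  define st where "st = (\<lambda>z. F' (mul (F (fst z)) (F (snd z))))"
  have st: "continuous_map (prod_topology X X) X st"
    "\<And>x y. x \<in> topspace X \<Longrightarrow> y \<in> topspace X \<Longrightarrow> F (st (x, y)) = mul (F x) (F y)"
    using transported_operation[OF hm mul mul_M] by (simp_all add: st_def)
  \<comment> \<open>Left translation by \<open>k0\<close>, transported to \<open>X\<close>; it moves \<open>y0\<close> to \<open>k0\<close>.\<close>
  define \<psi> where "\<psi> x = st (k0, x)" for x
  have \<psi>: "continuous_map X X \<psi>"
    unfolding \<psi>_def using continuous_map_compose[OF continuous_map_pairedI[OF
        continuous_map_const[THEN iffD2] continuous_map_id] st(1)] k0 by (simp add: o_def id_def)
  have F\<psi>: "F (\<psi> x) = mul (F k0) (F x)" if "x \<in> topspace X" for x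
    using st(2)[OF k0 that] by (simp add: \<psi>_def)
  have \<psi>X: "\<psi> x \<in> topspace X" if "x \<in> topspace X" for x
    using continuous_map_image_subset_topspace[OF \<psi>] that by blast
  note reflect = homeomorphic_maps_limit_reflect_point[OF hm]
  show False
  proof (rule no_cancellative_operation[OF pn sq K V st(1) \<psi>])
    fix Fi :: "nat filter" and a b z
    assume a: "\<And>j. a j \<in> topspace X" and b: "\<And>j. b j \<in> topspace X"
      and lim_st: "limitin X (\<lambda>j. st (a j, b j)) z Fi" and lim_b: "limitin X b y0 Fi"
    have z: "z \<in> topspace X" using lim_st by (rule limitin_topspace)
    have "limitin G (\<lambda>j. mul (F (st (a j, b j))) (iv (F (b j)))) (mul (F z) (iv (F y0))) Fi"
      using lim_mul[OF continuous_map_limit[OF H(4) lim_st]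
          lim_iv[OF continuous_map_limit[OF H(4) lim_b]]] by (simp add: o_def)
    moreover have "mul (F (st (a j, b j))) (iv (F (b j))) = F (a j)" for j
      using st(2)[OF a b] alg(1) H(1)[OF a] H(1)[OF b] by simp
    moreover have "mul (F z) (iv (F y0)) = F z"
      using Fy0 alg(4,5) H(1)[OF z] by simp
    ultimately have "limitin G (\<lambda>j. F (a j)) (F z) Fi" by simp
    then show "\<exists>w. limitin X a w Fi"
      using reflect[of a, OF a z] by blast
  next
    fix a b z
    assume a: "\<And>j. a j \<in> topspace X" and b: "\<And>j. b j \<in> topspace X"
      and lim_st: "limitin X (\<lambda>j. st (a j, b j)) z sequentially"
      and lim_a: "limitin X a k0 sequentially"
    have z: "z \<in> topspace X" using lim_st by (rule limitin_topspace)
    have "limitin G (\<lambda>j. mul (F k0) (mul (iv (F (a j))) (F (st (a j, b j)))))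
            (mul (F k0) (mul (iv (F k0)) (F z))) sequentially"
      using lim_mul[OF Abstract_Limits.limitin_const_iff[THEN iffD2, OF Fk0]
          lim_mul[OF lim_iv[OF continuous_map_limit[OF H(4) lim_a]]
            continuous_map_limit[OF H(4) lim_st]]] by (simp add: o_def)
    moreover have "mul (F k0) (mul (iv (F (a j))) (F (st (a j, b j)))) = F (\<psi> (b j))" for j
      using st(2)[OF a b] alg(2) F\<psi>[OF b] H(1)[OF a] H(1)[OF b] by simp
    moreover have "mul (F k0) (mul (iv (F k0)) (F z)) = F z"
      using alg(3) Fk0 H(1)[OF z] by simp
    ultimately have "limitin G (\<lambda>j. F (\<psi> (b j))) (F z) sequentially" by simp
    then show "\<exists>w. limitin X (\<lambda>j. \<psi> (b j)) w sequentially"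
      using reflect[of "\<lambda>j. \<psi> (b j)", OF \<psi>X[OF b] z] by blast
  next
    fix x
    assume x: "\<And>j. x j \<in> topspace X" and lim_\<psi>: "limitin X (\<lambda>j. \<psi> (x j)) (\<psi> y0) sequentially"
    have "limitin G (\<lambda>j. mul (iv (F k0)) (F (\<psi> (x j)))) (mul (iv (F k0)) (F (\<psi> y0))) sequentially"
      using lim_mul[OF Abstract_Limits.limitin_const_iff[THEN iffD2, OF iv_Fk0] continuous_map_limit[OF H(4) lim_\<psi>]]
      by (simp add: o_def)
    moreover have "mul (iv (F k0)) (F (\<psi> (x j))) = F (x j)" for j
      using F\<psi>[OF x] alg(2) Fk0 H(1)[OF x] by simp
    moreover have "mul (iv (F k0)) (F (\<psi> y0)) = F y0"
      using F\<psi>[OF y0] alg(2) Fk0 H(1)[OF y0] by simp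
    ultimately have "limitin G (\<lambda>j. F (x j)) (F y0) sequentially" by simp
    then show "limitin X x y0 sequentially"
      using reflect[of x, OF x y0] by blast
  qed
qed

lemma K_configuration_closed_embedding:
  assumes K: "K_configuration Y \<kappa> k0" and C: "closedin X C"
    and hm: "homeomorphic_maps Y (subtopology X C) g g'"
  shows "K_configuration X (\<lambda>n m. g (\<kappa> n m)) (g k0)"
proof -
  note H = homeomorphic_maps_subtopologyD[OF hm]
  have k0: "k0 \<in> topspace Y" and \<kappa>: "\<And>n m. \<kappa> n m \<in> topspace Y"
    and K_nbhd: "\<And>U. openin Y U \<Longrightarrow> k0 \<in> U \<Longrightarrow> \<exists>N. \<forall>n\<ge>N. \<forall>m. \<kappa> n m \<in> U"
    and K_rows: "\<And>n (F :: nat filter) mm z. F \<noteq> bot \<Longrightarrow> filterlim mm at_top F \<Longrightarrow>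
                   \<not> limitin Y (\<lambda>j. \<kappa> n (mm j)) z F"
    using K by (auto simp: K_configuration_def)
  have nbhd: "\<exists>N. \<forall>n\<ge>N. \<forall>m. g (\<kappa> n m) \<in> U" if "openin X U" "g k0 \<in> U" for U
  proof -
    have "openin Y {y \<in> topspace Y. g y \<in> U}"
      by (rule openin_continuous_map_preimage[OF H(4) that(1)])
    then show ?thesis
      using K_nbhd[of "{y \<in> topspace Y. g y \<in> U}"] k0 that(2) by auto
  qed
  have rows: "\<not> limitin X (\<lambda>j. g (\<kappa> n (mm j))) z F"
    if F: "F \<noteq> bot" and mm: "filterlim mm at_top F" for n and F :: "nat filter" and mm z
  proof
    assume lim: "limitin X (\<lambda>j. g (\<kappa> n (mm j))) z F"
    have "z \<in> C"
      by (rule limitin_closedin[OF lim C always_eventually F]) (use H(1) \<kappa> in blast)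
    then have "limitin Y (\<lambda>j. \<kappa> n (mm j)) (g' z) F"
      by (rule homeomorphic_maps_limit_reflect[OF hm \<kappa> _ lim])
    then show False using K_rows[OF F mm] by blast
  qed
  show ?thesis
    unfolding K_configuration_def
  proof (intro conjI allI impI)
    show "g k0 \<in> topspace X" "g (\<kappa> n m) \<in> topspace X" for n m
      using H(1) k0 \<kappa> by blast+
  qed (use nbhd rows in blast)+
qed

lemma fan_configuration_embedding:
  assumes V: "fan_configuration Y \<nu> y0"
    and hm: "homeomorphic_maps Y (subtopology X S) h h'"
  shows "fan_configuration X (\<lambda>n m. h (\<nu> n m)) (h y0)"
proof -
  note H = homeomorphic_maps_subtopologyD[OF hm]
  have y0: "y0 \<in> topspace Y" and \<nu>: "\<And>n m. \<nu> n m \<in> topspace Y"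
    and \<nu>_lim: "\<And>n. limitin Y (\<nu> n) y0 sequentially"
    and \<nu>_diag: "\<And>nn mm. filterlim nn at_top sequentially \<Longrightarrow>
                   \<not> limitin Y (\<lambda>j. \<nu> (nn j) (mm j)) y0 sequentially"
    using V by (auto simp: fan_configuration_def)
  have lim: "limitin X (\<lambda>m. h (\<nu> n m)) (h y0) sequentially" for n
    using continuous_map_limit[OF H(4) \<nu>_lim[of n]] by (simp add: o_def)
  have diag: "\<not> limitin X (\<lambda>j. h (\<nu> (nn j) (mm j))) (h y0) sequentially"
    if nn: "filterlim nn at_top sequentially" for nn mm
  proof
    assume "limitin X (\<lambda>j. h (\<nu> (nn j) (mm j))) (h y0) sequentially"
    then have "limitin Y (\<lambda>j. \<nu> (nn j) (mm j)) y0 sequentially"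
      by (rule homeomorphic_maps_limit_reflect_point[OF hm \<nu> y0])
    then show False using \<nu>_diag[OF nn] by simp
  qed
  show ?thesis
    unfolding fan_configuration_def
  proof (intro conjI allI impI)
    show "h y0 \<in> topspace X" "h (\<nu> n m) \<in> topspace X" for n m
      using H(1) y0 \<nu> by blast+
  qed (use lim diag in blast)+
qed

text \<open>The points \<open>(1/n, 1/(nm))\<close> of \<open>K\<close>, indexed from zero.\<close>

definition kpt :: "nat \<Rightarrow> nat \<Rightarrow> real \<times> real" where
  "kpt n m = (1 / real (Suc n), 1 / real (Suc n * Suc m))"

lemma kpt_in_K_set: "kpt n m \<in> K_set"
  unfolding K_set_def kpt_def
  by (rule insertI2, rule CollectI, rule exI[of _ "Suc n"], rule exI[of _ "Suc m"]) simp

lemma kpt_norm_le: "norm (kpt n m) \<le> 2 / real (Suc n)"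
proof -
  have "1 / real (Suc n * Suc m) \<le> 1 / real (Suc n)"
    by (intro divide_left_mono) (simp_all del: of_nat_Suc)
  then have "norm (kpt n m) \<le> 1 / real (Suc n) + 1 / real (Suc n)"
    using norm_Pair_le[of "1 / real (Suc n)" "1 / real (Suc n * Suc m)"] by (simp add: kpt_def)
  then show ?thesis by simp
qed

text \<open>The space \<open>K\<close> carries a K-configuration: row \<open>n\<close> converges in the plane to
  \<open>(1/(n+1), 0)\<close>, which is not in \<open>K\<close>.\<close>

lemma K_set_configuration: "K_configuration (top_of_set K_set) kpt (0, 0)"
  unfolding K_configuration_def
proof (intro conjI allI impI notI)
  show "(0, 0) \<in> topspace (top_of_set K_set)" "kpt n m \<in> topspace (top_of_set K_set)" for n m
    using kpt_in_K_set by (auto simp: K_set_def)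
next
  fix U assume "openin (top_of_set K_set) U \<and> (0, 0) \<in> U"
  then obtain T where T: "open T" "U = K_set \<inter> T" "(0, 0) \<in> T"
    by (auto simp: openin_open)
  then obtain e where e: "e > 0" "ball 0 e \<subseteq> T"
    by (metis open_contains_ball zero_prod_def)
  obtain N where "inverse (real (Suc N)) < e / 2"
    using reals_Archimedean[of "e / 2"] e(1) by auto
  then have N: "2 / real (Suc N) < e"
    by (simp add: field_simps)
  have "kpt n m \<in> U" if "n \<ge> N" for n m
  proof -
    have "2 / real (Suc n) \<le> 2 / real (Suc N)"
      using that by (simp add: frac_le)
    then have "kpt n m \<in> ball 0 e"
      using kpt_norm_le[of n m] N by simp
    then show ?thesis using e T kpt_in_K_set by auto
  qed
  then show "\<exists>N. \<forall>n\<ge>N. \<forall>m. kpt n m \<in> U" by blast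
next
  fix n and F :: "nat filter" and mm z
  assume F: "F \<noteq> bot \<and> filterlim mm at_top F"
    and lim: "limitin (top_of_set K_set) (\<lambda>j. kpt n (mm j)) z F"
  then have zK: "z \<in> K_set" and Lz: "((\<lambda>j. kpt n (mm j)) \<longlongrightarrow> z) F"
    by (auto simp: limitin_subtopology)
  have "(\<lambda>m. 1 / real (Suc n * Suc m)) \<longlonglongrightarrow> 0"
    using tendsto_mult_right_zero[OF LIMSEQ_inverse_real_of_nat, of "inverse (real (Suc n))"]
    by (simp add: field_simps)
  from filterlim_compose[OF this] F
  have "((\<lambda>j. kpt n (mm j)) \<longlongrightarrow> (1 / real (Suc n), 0)) F"
    unfolding kpt_def by (intro tendsto_Pair tendsto_const) auto
  with Lz F have "z = (1 / real (Suc n), 0)"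
    using tendsto_unique by blast
  with zK show False unfolding K_set_def by auto
qed

lemma openin_fan_V:
  "openin fan_V U \<longleftrightarrow>
     U \<subseteq> fan_quot ` topspace NS0_top \<and> openin NS0_top {x \<in> topspace NS0_top. fan_quot x \<in> U}"
proof -
  define P where "P U = {x \<in> topspace NS0_top. fan_quot x \<in> U}" for U
  have "P (S \<inter> T) = P S \<inter> P T" "P (\<Union>\<K>) = \<Union>(P ` \<K>)" for S T \<K>
    by (auto simp: P_def)
  then have "istopology (\<lambda>U. U \<subseteq> fan_quot ` topspace NS0_top \<and> openin NS0_top (P U))"
    unfolding istopology_def by auto
  then show ?thesis
    by (simp add: fan_V_def P_def)
qed

lemma topspace_NS0: "topspace NS0_top = {n. n \<ge> 1} \<times> S0_set"
  by (simp add: NS0_top_def)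

lemma topspace_fan_V: "topspace fan_V = fan_quot ` topspace NS0_top"
proof -
  have "{x \<in> topspace NS0_top. fan_quot x \<in> fan_quot ` topspace NS0_top} = topspace NS0_top"
    by auto
  then have "openin fan_V (fan_quot ` topspace NS0_top)"
    unfolding openin_fan_V by simp
  then show ?thesis
    by (metis openin_fan_V openin_subset openin_topspace subset_antisym)
qed

lemma S0_set_points: "0 \<in> S0_set" "1 / real (Suc m) \<in> S0_set"
  unfolding S0_set_def by (auto intro!: exI[of _ "Suc m"])

lemma fan_V_points: "None \<in> topspace fan_V" "Some (Suc n, 1 / real (Suc m)) \<in> topspace fan_V"
proof -
  have "(1, 0) \<in> topspace NS0_top" "(Suc n, 1 / real (Suc m)) \<in> topspace NS0_top"
    using S0_set_points by (simp_all add: topspace_NS0)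
  moreover have "fan_quot (1, 0) = None"
    "fan_quot (Suc n, 1 / real (Suc m)) = Some (Suc n, 1 / real (Suc m))"
    by (simp_all add: fan_quot_def)
  ultimately show "None \<in> topspace fan_V" "Some (Suc n, 1 / real (Suc m)) \<in> topspace fan_V"
    unfolding topspace_fan_V by (metis image_eqI)+
qed

lemma fan_V_vertex_nbhd:
  assumes c: "\<And>a. c a > 0"
  defines "P \<equiv> {x \<in> topspace NS0_top. snd x < c (fst x)}"
  shows "openin fan_V (fan_quot ` P)" "None \<in> fan_quot ` P"
    and "{x \<in> topspace NS0_top. fan_quot x \<in> fan_quot ` P} = P"
proof -
  show preimage: "{x \<in> topspace NS0_top. fan_quot x \<in> fan_quot ` P} = P"
  proof (intro set_eqI iffI)
    fix x assume x: "x \<in> {x \<in> topspace NS0_top. fan_quot x \<in> fan_quot ` P}"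
    then obtain y where y: "y \<in> P" "fan_quot x = fan_quot y" by auto
    show "x \<in> P"
    proof (cases "snd x = 0")
      case True then show ?thesis using x c by (auto simp: P_def)
    next
      case False
      then have "y = x" using y(2) by (auto simp: fan_quot_def split: if_splits)
      then show ?thesis using y by simp
    qed
  qed (auto simp: P_def)
  have "openin NS0_top P"
    unfolding NS0_top_def openin_prod_topology_alt
  proof (intro allI impI)
    fix a t assume at: "(a, t) \<in> P"
    show "\<exists>A B. openin (discrete_topology {n. n \<ge> 1}) A \<and> openin (top_of_set S0_set) B \<and>
                a \<in> A \<and> t \<in> B \<and> A \<times> B \<subseteq> P"
    proof (intro exI conjI)
      show "openin (discrete_topology {n. n \<ge> 1}) {a}"
        using at by (auto simp: P_def topspace_NS0)
      show "openin (top_of_set S0_set) (S0_set \<inter> {..<c a})"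
        by (simp add: openin_open_Int)
    qed (use at in \<open>auto simp: P_def topspace_NS0\<close>)
  qed
  then show "openin fan_V (fan_quot ` P)"
    unfolding openin_fan_V preimage by (auto simp: P_def)
  have "(1, 0) \<in> P" "fan_quot (1, 0) = None"
    using S0_set_points c by (auto simp: P_def topspace_NS0 fan_quot_def)
  then show "None \<in> fan_quot ` P"
    by (metis image_eqI)
qed

lemma fan_V_spine_limit: "limitin fan_V (\<lambda>m. Some (Suc n, 1 / real (Suc m))) None sequentially"
  unfolding limitin_def
proof (intro conjI allI impI fan_V_points)
  fix U assume U: "openin fan_V U \<and> None \<in> U"
  define P where "P = {x \<in> topspace NS0_top. fan_quot x \<in> U}"
  have P: "openin NS0_top P" using U by (simp add: openin_fan_V P_def)
  have "(Suc n, 0) \<in> P"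
    using U S0_set_points by (auto simp: P_def topspace_NS0 fan_quot_def)
  then obtain A B where AB: "openin (top_of_set S0_set) B" "Suc n \<in> A" "0 \<in> B" "A \<times> B \<subseteq> P"
    using P unfolding NS0_top_def openin_prod_topology_alt by meson
  obtain e where e: "e > 0" "S0_set \<inter> ball 0 e \<subseteq> B"
    using AB(1,3) unfolding openin_contains_ball by fastforce
  obtain N where N: "inverse (real (Suc N)) < e"
    using reals_Archimedean e(1) by blast
  have "Some (Suc n, 1 / real (Suc m)) \<in> U" if "m \<ge> N" for m
  proof -
    have "1 / real (Suc m) \<le> 1 / real (Suc N)" using that by (simp add: frac_le)
    then have "1 / real (Suc m) \<in> B"
      using N e S0_set_points by (auto simp: inverse_eq_divide)
    then have "(Suc n, 1 / real (Suc m)) \<in> P" using AB(2,4) by auto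
    then show ?thesis by (simp add: P_def fan_quot_def)
  qed
  then show "\<forall>\<^sub>F m in sequentially. Some (Suc n, 1 / real (Suc m)) \<in> U"
    unfolding eventually_sequentially by blast
qed

text \<open>A sequence visiting spines with index tending to infinity does not converge to the vertex:
  it meets each spine only finitely often, so a neighbourhood of the vertex misses it.\<close>

lemma fan_V_diagonal_not_limit:
  assumes nn: "filterlim nn at_top sequentially"
  shows "\<not> limitin fan_V (\<lambda>j. Some (Suc (nn j), 1 / real (Suc (mm j)))) None sequentially"
proof
  assume lim: "limitin fan_V (\<lambda>j. Some (Suc (nn j), 1 / real (Suc (mm j)))) None sequentially"
  \<comment> \<open>Only finitely many terms lie on each spine, so below all of them there is room for
    a neighbourhood of the vertex missing the whole sequence.\<close>
  define J where "J a = {j. Suc (nn j) = a}" for a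
  have finJ: "finite (J a)" for a
  proof -
    obtain N where N: "\<And>j. j \<ge> N \<Longrightarrow> nn j \<ge> a"
      using nn by (auto simp: filterlim_at_top eventually_sequentially)
    have "J a \<subseteq> {..<N}"
      using N by (force simp: J_def not_le[symmetric])
    then show ?thesis by (rule finite_subset) simp
  qed
  define c where "c a = Min (insert 1 ((\<lambda>j. 1 / real (Suc (mm j))) ` J a))" for a
  have c_pos: "c a > 0" for a
    unfolding c_def using finJ by (subst Min_gr_iff) auto
  have c_le: "c (Suc (nn j)) \<le> 1 / real (Suc (mm j))" for j
    unfolding c_def using finJ[of "Suc (nn j)"] by (intro Min_le) (auto simp: J_def)
  define P where "P = {x \<in> topspace NS0_top. snd x < c (fst x)}"
  note U = fan_V_vertex_nbhd[of c, OF c_pos, folded P_def]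
  obtain j where "Some (Suc (nn j), 1 / real (Suc (mm j))) \<in> fan_quot ` P"
    using limitinD[OF lim U(1,2)] by (meson eventually_sequentially order_refl)
  then have "(Suc (nn j), 1 / real (Suc (mm j))) \<in> P"
    using U(3) S0_set_points by (auto simp: fan_quot_def topspace_NS0)
  then show False
    using c_le[of j] by (simp add: P_def)
qed

lemma fan_V_configuration:
  "fan_configuration fan_V (\<lambda>n m. Some (Suc n, 1 / real (Suc m))) None"
  unfolding fan_configuration_def
  using fan_V_points fan_V_spine_limit fan_V_diagonal_not_limit by blast

theorem theorem2:
  fixes X :: "'a topology" and V' :: "'a set" and h :: "(nat \<times> real) option \<Rightarrow> 'a"
  assumes pn: "perfectly_normal_space X"
      and seq: "sequential_space X"
      and K: "\<exists>C. closedin X C \<and> subtopology X C homeomorphic_space top_of_set K_set"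
      and V'sub: "V' \<subseteq> topspace X"
      and hV: "homeomorphic_map fan_V (subtopology X V') h"
  shows "(\<forall>(T :: 'v::real_vector topology) C. linear_topological_space T \<and> convex C \<and> closedin T C
            \<longrightarrow> \<not> (X homeomorphic_space subtopology T C))
     \<and> (\<forall>(G :: 'g topology) mul e iv M. topological_group G mul e iv \<and> M \<subseteq> topspace G \<and>
            closedin G M \<and> multiplicative_subset mul M
            \<longrightarrow> \<not> (X homeomorphic_space subtopology G M))
     \<and> (\<forall>(G :: 'k topology) mul e iv M f. topological_group G mul e iv \<and> M \<subseteq> topspace G \<and>
            multiplicative_subset mul M \<and> homeomorphic_map X (subtopology G M) f
            \<longrightarrow> f (h None) \<noteq> e)"
proof -
  obtain C g g' where "closedin X C" "homeomorphic_maps (top_of_set K_set) (subtopology X C) g g'"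
    using K by (metis homeomorphic_space_def homeomorphic_space_sym)
  then have Kc: "K_configuration X (\<lambda>n m. g (kpt n m)) (g (0, 0))"
    by (rule K_configuration_closed_embedding[OF K_set_configuration])
  obtain h' where "homeomorphic_maps fan_V (subtopology X V') h h'"
    using hV homeomorphic_map_maps by blast
  then have Vc: "fan_configuration X (\<lambda>n m. h (Some (Suc n, 1 / real (Suc m)))) (h None)"
    by (rule fan_configuration_embedding[OF fan_V_configuration])
  note no_embedding = closed_convex_no_embedding closed_multiplicative_no_embedding
    multiplicative_identity_no_embedding
  show ?thesis
    using no_embedding[OF pn seq Kc Vc]
    by (meson homeomorphic_space_def homeomorphic_map_maps)
qed

end
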